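(* Let $\mathcal{L}=(R_i:i<k)$ be a finite relational language, $K$ a Fraïssé class of finite $\mathcal{L}$-structures with the Strong Amalgamation Property, and $T$ the theory of its Fraïssé limit. Let $N=(A,B)$ be a monster model of $T_{pfc}$ (with $A$ the universe of sort $O$ and $B$ the universe of sort $P$). Then for any $A_0\subseteq A$ and $B_0\subseteq B$, we have $\mathrm{acl}(A_0\cup B_0)\cap B=B_0$.
   Context: $K$ has SAP if for all $A,B,C\in K$ and embeddings $e:A\to B$, $f:A\to C$ there are $D\in K$ and embeddings $g:B\to D$, $h:C\to D$ with $ge=hf$ and $\mathrm{im}(g)\cap\mathrm{im}(h)=\mathrm{im}(ge)$. If $R_i$ has arity $n_i$, $\mathcal{L}_{pfc}$ is the two-sorted language with sorts $O$ and $P$ and relation symbols $R^i_x(x,y_1,\dots,y_{n_i})$ with $x$ of sort $P$ and $y_1,\dots,y_{n_i}$ of sort $O$. For an $\mathcal{L}_{pfc}$-structure $M=(A,B)$ and $b\in B$, $A_b$ is the $\mathcal{L}$-structure with domain $A$ in which $R_i$ is interpreted as $\{\bar y: R^i(b,\bar y)\}$. $K_{pfc}$ is the class of finite $\mathcal{L}_{pfc}$-structures $(A,B)$ such that $A_b$ is isomorphic to a member of $K$ for every $b\in B$; it is a Fraïssé class with SAP, and $T_{pfc}$ is the theory of its Fraïssé limit (it has quantifier elimination). acl is computed in $N$ over parameters from both sorts. *)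

theory Defs
  imports Main "HOL-Library.Countable_Set"
begin

text \<open>The language L = (R_i : i < k) is given by k and the arity function ar.
  An L-structure is a domain together with an interpretation of the R_i
  as sets of tuples (lists) of length ar i.\<close>

record 'u lstr =
  ldom :: "'u set"
  lrel :: "nat \<Rightarrow> 'u list \<Rightarrow> bool"

definition wf_lstr :: "nat \<Rightarrow> (nat \<Rightarrow> nat) \<Rightarrow> ('u, 'z) lstr_scheme \<Rightarrow> bool" where
  "wf_lstr k ar S \<longleftrightarrow>
     (\<forall>i ys. lrel S i ys \<longrightarrow> i < k \<and> length ys = ar i \<and> set ys \<subseteq> ldom S)"

definition lemb :: "('u \<Rightarrow> 'v) \<Rightarrow> 'u lstr \<Rightarrow> 'v lstr \<Rightarrow> bool" where
  "lemb f S T \<longleftrightarrow> inj_on f (ldom S) \<and> f ` ldom S \<subseteq> ldom T \<and>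
     (\<forall>i. \<forall>ys \<in> lists (ldom S). lrel S i ys \<longleftrightarrow> lrel T i (map f ys))"

definition liso :: "('u \<Rightarrow> 'v) \<Rightarrow> 'u lstr \<Rightarrow> 'v lstr \<Rightarrow> bool" where
  "liso f S T \<longleftrightarrow> lemb f S T \<and> f ` ldom S = ldom T"

definition lisomorphic :: "'u lstr \<Rightarrow> 'v lstr \<Rightarrow> bool" where
  "lisomorphic S T \<longleftrightarrow> (\<exists>f. liso f S T)"

definition lrestrict :: "'u lstr \<Rightarrow> 'u set \<Rightarrow> 'u lstr" where
  "lrestrict S D = \<lparr>ldom = D, lrel = (\<lambda>i ys. lrel S i ys \<and> set ys \<subseteq> D)\<rparr>"

text \<open>A class K of finite L-structures (represented, up to isomorphism, by
  structures with universe a subset of nat).\<close>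

definition fraisse_class :: "nat \<Rightarrow> (nat \<Rightarrow> nat) \<Rightarrow> nat lstr set \<Rightarrow> bool" where
  "fraisse_class k ar K \<longleftrightarrow>
     K \<noteq> {} \<and>
     (\<forall>S\<in>K. wf_lstr k ar S \<and> finite (ldom S)) \<and>
     (\<forall>S\<in>K. \<forall>T. wf_lstr k ar T \<and> lisomorphic S T \<longrightarrow> T \<in> K) \<and>
     (\<forall>S\<in>K. \<forall>D. D \<subseteq> ldom S \<longrightarrow> lrestrict S D \<in> K) \<and>
     (\<forall>S1\<in>K. \<forall>S2\<in>K. \<exists>S3\<in>K. (\<exists>g. lemb g S1 S3) \<and> (\<exists>h. lemb h S2 S3)) \<and>
     (\<forall>S0\<in>K. \<forall>S1\<in>K. \<forall>S2\<in>K. \<forall>e f. lemb e S0 S1 \<and> lemb f S0 S2 \<longrightarrow>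
        (\<exists>S3\<in>K. \<exists>g h. lemb g S1 S3 \<and> lemb h S2 S3 \<and>
           (\<forall>a\<in>ldom S0. g (e a) = h (f a))))"

definition SAP :: "nat lstr set \<Rightarrow> bool" where
  "SAP K \<longleftrightarrow>
     (\<forall>S0\<in>K. \<forall>S1\<in>K. \<forall>S2\<in>K. \<forall>e f. lemb e S0 S1 \<and> lemb f S0 S2 \<longrightarrow>
        (\<exists>S3\<in>K. \<exists>g h. lemb g S1 S3 \<and> lemb h S2 S3 \<and>
           (\<forall>a\<in>ldom S0. g (e a) = h (f a)) \<and>
           g ` ldom S1 \<inter> h ` ldom S2 = (g \<circ> e) ` ldom S0))"

text \<open>sO is the universe of sort O, sP the universe of sort P, and
  prel i b ys means R^i(b, ys).\<close>

record ('a, 'b) pstr =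
  sO :: "'a set"
  sP :: "'b set"
  prel :: "nat \<Rightarrow> 'b \<Rightarrow> 'a list \<Rightarrow> bool"

definition wf_pstr :: "nat \<Rightarrow> (nat \<Rightarrow> nat) \<Rightarrow> ('a, 'b) pstr \<Rightarrow> bool" where
  "wf_pstr k ar M \<longleftrightarrow>
     (\<forall>i b ys. prel M i b ys \<longrightarrow> i < k \<and> b \<in> sP M \<and> length ys = ar i \<and> set ys \<subseteq> sO M)"

definition fibre :: "('a, 'b) pstr \<Rightarrow> 'b \<Rightarrow> 'a lstr" where
  "fibre M b = \<lparr>ldom = sO M, lrel = (\<lambda>i ys. prel M i b ys)\<rparr>"

definition in_Kpfc :: "nat \<Rightarrow> (nat \<Rightarrow> nat) \<Rightarrow> nat lstr set \<Rightarrow> ('a, 'b) pstr \<Rightarrow> bool" where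
  "in_Kpfc k ar K M \<longleftrightarrow> wf_pstr k ar M \<and> finite (sO M) \<and> finite (sP M) \<and>
     (\<forall>b\<in>sP M. \<exists>S\<in>K. lisomorphic (fibre M b) S)"

definition pemb :: "('a \<Rightarrow> 'c) \<Rightarrow> ('b \<Rightarrow> 'd) \<Rightarrow> ('a, 'b) pstr \<Rightarrow> ('c, 'd) pstr \<Rightarrow> bool" where
  "pemb f g M N \<longleftrightarrow> inj_on f (sO M) \<and> inj_on g (sP M) \<and>
     f ` sO M \<subseteq> sO N \<and> g ` sP M \<subseteq> sP N \<and>
     (\<forall>i. \<forall>b\<in>sP M. \<forall>ys\<in>lists (sO M). prel M i b ys \<longleftrightarrow> prel N i (g b) (map f ys))"

definition piso :: "('a \<Rightarrow> 'c) \<Rightarrow> ('b \<Rightarrow> 'd) \<Rightarrow> ('a, 'b) pstr \<Rightarrow> ('c, 'd) pstr \<Rightarrow> bool" where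
  "piso f g M N \<longleftrightarrow> pemb f g M N \<and> f ` sO M = sO N \<and> g ` sP M = sP N"

definition prestrict :: "('a, 'b) pstr \<Rightarrow> 'a set \<Rightarrow> 'b set \<Rightarrow> ('a, 'b) pstr" where
  "prestrict M A B = \<lparr>sO = A, sP = B,
      prel = (\<lambda>i b ys. prel M i b ys \<and> b \<in> B \<and> set ys \<subseteq> A)\<rparr>"

definition fraisse_limit_pfc ::
    "nat \<Rightarrow> (nat \<Rightarrow> nat) \<Rightarrow> nat lstr set \<Rightarrow> ('a, 'b) pstr \<Rightarrow> bool" where
  "fraisse_limit_pfc k ar K M \<longleftrightarrow>
     wf_pstr k ar M \<and> countable (sO M) \<and> countable (sP M) \<and>
     (\<forall>A' B'. A' \<subseteq> sO M \<and> B' \<subseteq> sP M \<and> finite A' \<and> finite B' \<longrightarrow>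
        in_Kpfc k ar K (prestrict M A' B')) \<and>
     (\<forall>F :: (nat, nat) pstr. in_Kpfc k ar K F \<longrightarrow> (\<exists>f g. pemb f g F M)) \<and>
     (\<forall>A1 B1 A2 B2 f g. A1 \<subseteq> sO M \<and> B1 \<subseteq> sP M \<and> A2 \<subseteq> sO M \<and> B2 \<subseteq> sP M \<and>
        finite A1 \<and> finite B1 \<and>
        piso f g (prestrict M A1 B1) (prestrict M A2 B2) \<longrightarrow>
        (\<exists>F G. piso F G M M \<and> (\<forall>a\<in>A1. F a = f a) \<and> (\<forall>b\<in>B1. G b = g b)))"

text \<open>Variables of sort O and of sort P are both indexed by nat (separately).\<close>
datatype fm =
    EqO nat nat
  | EqP nat nat
  | Rl nat nat "nat list"   \<comment> \<open>Rl i x ys = R^i(x, ys), x of sort P, ys of sort O\<close>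
  | Neg fm
  | Conj fm fm
  | ExO nat fm
  | ExP nat fm

fun fvO :: "fm \<Rightarrow> nat set" where
  "fvO (EqO x y) = {x, y}"
| "fvO (EqP x y) = {}"
| "fvO (Rl i x ys) = set ys"
| "fvO (Neg p) = fvO p"
| "fvO (Conj p q) = fvO p \<union> fvO q"
| "fvO (ExO x p) = fvO p - {x}"
| "fvO (ExP x p) = fvO p"

fun fvP :: "fm \<Rightarrow> nat set" where
  "fvP (EqO x y) = {}"
| "fvP (EqP x y) = {x, y}"
| "fvP (Rl i x ys) = {x}"
| "fvP (Neg p) = fvP p"
| "fvP (Conj p q) = fvP p \<union> fvP q"
| "fvP (ExO x p) = fvP p"
| "fvP (ExP x p) = fvP p - {x}"

fun sat :: "('a, 'b) pstr \<Rightarrow> fm \<Rightarrow> (nat \<Rightarrow> 'a) \<Rightarrow> (nat \<Rightarrow> 'b) \<Rightarrow> bool" where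
  "sat M (EqO x y) va vb \<longleftrightarrow> va x = va y"
| "sat M (EqP x y) va vb \<longleftrightarrow> vb x = vb y"
| "sat M (Rl i x ys) va vb \<longleftrightarrow> prel M i (vb x) (map va ys)"
| "sat M (Neg p) va vb \<longleftrightarrow> \<not> sat M p va vb"
| "sat M (Conj p q) va vb \<longleftrightarrow> sat M p va vb \<and> sat M q va vb"
| "sat M (ExO x p) va vb \<longleftrightarrow> (\<exists>a\<in>sO M. sat M p (va(x := a)) vb)"
| "sat M (ExP x p) va vb \<longleftrightarrow> (\<exists>b\<in>sP M. sat M p va (vb(x := b)))"

definition sentence :: "fm \<Rightarrow> bool" where
  "sentence p \<longleftrightarrow> fvO p = {} \<and> fvP p = {}"

definition models_Th :: "('a, 'b) pstr \<Rightarrow> ('c, 'd) pstr \<Rightarrow> bool" where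
  "models_Th N M \<longleftrightarrow> (\<forall>p. sentence p \<longrightarrow>
      ((\<forall>va vb. sat N p va vb) \<longleftrightarrow> (\<forall>va vb. sat M p va vb)))"

text \<open>The sort-P part of acl(A0 \<union> B0) computed in N: the elements b of sort P
  satisfying some formula phi(y, parameters from A0 \<union> B0) with only finitely
  many realisations of sort P in N.\<close>
definition aclP :: "('a, 'b) pstr \<Rightarrow> 'a set \<Rightarrow> 'b set \<Rightarrow> 'b set" where
  "aclP N A0 B0 = {b \<in> sP N. \<exists>p y va vb.
      (\<forall>x\<in>fvO p. va x \<in> A0) \<and> (\<forall>x\<in>fvP p - {y}. vb x \<in> B0) \<and>
      sat N p va (vb(y := b)) \<and>
      finite {b' \<in> sP N. sat N p va (vb(y := b'))}}"

end

theory Submission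
  imports Defs
begin

text \<open>
  In the Fraisse limit M the
  fibres over distinct points of sort P are independent of each other, so by universality the fibre
  of b over finitely many parameters of sort O can be copied onto arbitrarily many points, and by
  homogeneity an automorphism fixing the parameters moves b onto any such copy. Hence a formula
  satisfied by b, with b distinct from its parameters of sort P, has a realisation outside every
  finite set. For a fixed size of that set this is expressed by a single first-order sentence, which
  therefore also holds in N and contradicts finiteness of the set of realisations.
\<close>

lemma finite_fvO: "finite (fvO p)" by (induction p) auto
lemma finite_fvP: "finite (fvP p)" by (induction p) auto

lemma sat_cong:
  "\<forall>x\<in>fvO p. va x = va' x \<Longrightarrow> \<forall>x\<in>fvP p. vb x = vb' x \<Longrightarrow>
   sat M p va vb \<longleftrightarrow> sat M p va' vb'"
proof (induction p arbitrary: va va' vb vb')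
  case (Rl i x ys)
  have "map va ys = map va' ys" "vb x = vb' x" using Rl by (auto intro: map_cong)
  then show ?case by (simp only: sat.simps)
next
  case (Conj p q)
  have "sat M p va vb \<longleftrightarrow> sat M p va' vb'" by (rule Conj.IH(1)) (use Conj.prems in auto)
  moreover have "sat M q va vb \<longleftrightarrow> sat M q va' vb'" by (rule Conj.IH(2)) (use Conj.prems in auto)
  ultimately show ?case by simp
next
  case (ExO x p)
  have "sat M p (va(x := a)) vb \<longleftrightarrow> sat M p (va'(x := a)) vb'" for a
    by (rule ExO.IH) (use ExO.prems in auto)
  then show ?case by simp
next
  case (ExP x p)
  have "sat M p va (vb(x := b)) \<longleftrightarrow> sat M p va' (vb'(x := b))" for b
    by (rule ExP.IH) (use ExP.prems in auto)
  then show ?case by simp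
qed simp_all

fun allO :: "nat list \<Rightarrow> fm \<Rightarrow> fm" where
  "allO [] r = r"
| "allO (x # xs) r = Neg (ExO x (Neg (allO xs r)))"

fun allP :: "nat list \<Rightarrow> fm \<Rightarrow> fm" where
  "allP [] r = r"
| "allP (x # xs) r = Neg (ExP x (Neg (allP xs r)))"

lemma fv_allO: "fvO (allO xs r) = fvO r - set xs" "fvP (allO xs r) = fvP r"
  by (induction xs) auto

lemma fv_allP: "fvO (allP xs r) = fvO r" "fvP (allP xs r) = fvP r - set xs"
  by (induction xs) auto

lemma sat_allO:
  "sat M (allO xs r) va vb \<longleftrightarrow>
   (\<forall>va'. (\<forall>x\<in>set xs. va' x \<in> sO M) \<and> (\<forall>x. x \<notin> set xs \<longrightarrow> va' x = va x) \<longrightarrow> sat M r va' vb)"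
proof (induction xs arbitrary: va)
  case (Cons x xs)
  have "sat M (allO (x # xs) r) va vb \<longleftrightarrow> (\<forall>a\<in>sO M. \<forall>va'. (\<forall>z\<in>set xs. va' z \<in> sO M) \<and>
      (\<forall>z. z \<notin> set xs \<longrightarrow> va' z = (va(x := a)) z) \<longrightarrow> sat M r va' vb)"
    unfolding allO.simps sat.simps Cons.IH by blast
  also have "\<dots> \<longleftrightarrow> (\<forall>va'. (\<forall>z\<in>set (x # xs). va' z \<in> sO M) \<and>
      (\<forall>z. z \<notin> set (x # xs) \<longrightarrow> va' z = va z) \<longrightarrow> sat M r va' vb)" (is "?L \<longleftrightarrow> ?R")
  proof
    assume ?L
    show ?R
    proof (intro allI impI)
      fix va' assume "(\<forall>z\<in>set (x # xs). va' z \<in> sO M) \<and> (\<forall>z. z \<notin> set (x # xs) \<longrightarrow> va' z = va z)"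
      with \<open>?L\<close> show "sat M r va' vb" by (elim allE[of _ va'] ballE[of _ _ "va' x"]) auto
    qed
  next
    assume ?R
    show ?L
    proof (intro allI impI ballI)
      fix a va' assume "a \<in> sO M"
        and "(\<forall>z\<in>set xs. va' z \<in> sO M) \<and> (\<forall>z. z \<notin> set xs \<longrightarrow> va' z = (va(x := a)) z)"
      with \<open>?R\<close> show "sat M r va' vb" by (elim allE[of _ va']) (auto split: if_split_asm)
    qed
  qed
  finally show ?case .
qed (auto; metis ext)

lemma sat_allP:
  "sat M (allP ys r) va vb \<longleftrightarrow>
   (\<forall>vb'. (\<forall>x\<in>set ys. vb' x \<in> sP M) \<and> (\<forall>x. x \<notin> set ys \<longrightarrow> vb' x = vb x) \<longrightarrow> sat M r va vb')"
proof (induction ys arbitrary: vb)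
  case (Cons y ys)
  have "sat M (allP (y # ys) r) va vb \<longleftrightarrow> (\<forall>b\<in>sP M. \<forall>vb'. (\<forall>z\<in>set ys. vb' z \<in> sP M) \<and>
      (\<forall>z. z \<notin> set ys \<longrightarrow> vb' z = (vb(y := b)) z) \<longrightarrow> sat M r va vb')"
    unfolding allP.simps sat.simps Cons.IH by blast
  also have "\<dots> \<longleftrightarrow> (\<forall>vb'. (\<forall>z\<in>set (y # ys). vb' z \<in> sP M) \<and>
      (\<forall>z. z \<notin> set (y # ys) \<longrightarrow> vb' z = vb z) \<longrightarrow> sat M r va vb')" (is "?L \<longleftrightarrow> ?R")
  proof
    assume ?L
    show ?R
    proof (intro allI impI)
      fix vb' assume "(\<forall>z\<in>set (y # ys). vb' z \<in> sP M) \<and> (\<forall>z. z \<notin> set (y # ys) \<longrightarrow> vb' z = vb z)"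
      with \<open>?L\<close> show "sat M r va vb'" by (elim allE[of _ vb'] ballE[of _ _ "vb' y"]) auto
    qed
  next
    assume ?R
    show ?L
    proof (intro allI impI ballI)
      fix b vb' assume "b \<in> sP M"
        and "(\<forall>z\<in>set ys. vb' z \<in> sP M) \<and> (\<forall>z. z \<notin> set ys \<longrightarrow> vb' z = (vb(y := b)) z)"
      with \<open>?R\<close> show "sat M r va vb'" by (elim allE[of _ vb']) (auto split: if_split_asm)
    qed
  qed
  finally show ?case .
qed (auto; metis ext)

lemma models_Th_transfer:
  assumes "models_Th N M" and "fvO q \<subseteq> set xs" and "fvP q \<subseteq> set ys"
    and holds_in_M: "\<And>va vb. \<forall>x\<in>set xs. va x \<in> sO M \<Longrightarrow> \<forall>x\<in>set ys. vb x \<in> sP M \<Longrightarrow> sat M q va vb"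
    and "\<forall>x\<in>set xs. va x \<in> sO N" and "\<forall>x\<in>set ys. vb x \<in> sP N"
  shows "sat N q va vb"
proof -
  let ?closure = "allO xs (allP ys q)"
  have "sentence ?closure" using assms(2,3) by (auto simp: sentence_def fv_allO fv_allP)
  moreover have "sat M ?closure va' vb'" for va' vb'
    unfolding sat_allO sat_allP using holds_in_M by blast
  ultimately have "sat N ?closure va vb" using assms(1) unfolding models_Th_def by blast
  then show ?thesis unfolding sat_allO sat_allP using assms(5,6) by blast
qed

lemma sat_piso:
  assumes "piso F G M M'"
  shows "\<forall>x\<in>fvO p. va x \<in> sO M \<Longrightarrow> \<forall>x\<in>fvP p. vb x \<in> sP M \<Longrightarrow>
    sat M' p (F \<circ> va) (G \<circ> vb) \<longleftrightarrow> sat M p va vb"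
proof (induction p arbitrary: va vb)
  case (EqO x y)
  have "inj_on F (sO M)" using assms by (simp add: piso_def pemb_def)
  with EqO show ?case by (auto dest: inj_onD)
next
  case (EqP x y)
  have "inj_on G (sP M)" using assms by (simp add: piso_def pemb_def)
  with EqP show ?case by (auto dest: inj_onD)
next
  case (Rl i x ys)
  then have "vb x \<in> sP M" "map va ys \<in> lists (sO M)" by auto
  with assms have "prel M i (vb x) (map va ys) \<longleftrightarrow> prel M' i (G (vb x)) (map F (map va ys))"
    unfolding piso_def pemb_def by blast
  then show ?case by (simp add: comp_def)
next
  case (Conj p q)
  then show ?case by simp
next
  case (ExO x p)
  have IH: "sat M' p ((F \<circ> va)(x := F a)) (G \<circ> vb) \<longleftrightarrow> sat M p (va(x := a)) vb" if "a \<in> sO M" for a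
    unfolding fun_upd_comp[symmetric] by (rule ExO.IH) (use ExO.prems that in auto)
  have img: "sO M' = F ` sO M" using assms by (simp add: piso_def)
  have "sat M' (ExO x p) (F \<circ> va) (G \<circ> vb) \<longleftrightarrow>
      (\<exists>a\<in>sO M. sat M' p ((F \<circ> va)(x := F a)) (G \<circ> vb))"
    unfolding sat.simps img by blast
  also have "\<dots> \<longleftrightarrow> sat M (ExO x p) va vb" using IH by auto
  finally show ?case .
next
  case (ExP x p)
  have IH: "sat M' p (F \<circ> va) ((G \<circ> vb)(x := G b)) \<longleftrightarrow> sat M p va (vb(x := b))" if "b \<in> sP M" for b
    unfolding fun_upd_comp[symmetric] by (rule ExP.IH) (use ExP.prems that in auto)
  have img: "sP M' = G ` sP M" using assms by (simp add: piso_def)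
  have "sat M' (ExP x p) (F \<circ> va) (G \<circ> vb) \<longleftrightarrow>
      (\<exists>b\<in>sP M. sat M' p (F \<circ> va) ((G \<circ> vb)(x := G b)))"
    unfolding sat.simps img by blast
  also have "\<dots> \<longleftrightarrow> sat M (ExP x p) va vb" using IH by auto
  finally show ?case .
qed simp

lemma liso_comp:
  assumes f: "liso f S T" and g: "liso g T U"
  shows "liso (g \<circ> f) S U"
proof -
  have f_img: "f ` ldom S = ldom T" and g_img: "g ` ldom T = ldom U"
    using f g by (auto simp: liso_def)
  have "inj_on (g \<circ> f) (ldom S)"
    using f g f_img by (auto simp: liso_def lemb_def intro: comp_inj_on)
  moreover have "lrel S i ys \<longleftrightarrow> lrel U i (map (g \<circ> f) ys)" if "ys \<in> lists (ldom S)" for i ys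
  proof -
    have "map f ys \<in> lists (ldom T)" using that by (auto simp flip: f_img)
    with that f g show ?thesis by (simp add: liso_def lemb_def)
  qed
  moreover have "(g \<circ> f) ` ldom S = ldom U" using f_img g_img by (metis image_comp)
  ultimately show ?thesis by (simp add: liso_def lemb_def)
qed

lemma fraisse_limit_pfc_wf: "fraisse_limit_pfc k ar K M \<Longrightarrow> wf_pstr k ar M"
  by (simp add: fraisse_limit_pfc_def)

lemma fraisse_limit_pfc_age:
  "fraisse_limit_pfc k ar K M \<Longrightarrow> A' \<subseteq> sO M \<Longrightarrow> B' \<subseteq> sP M \<Longrightarrow> finite A' \<Longrightarrow> finite B' \<Longrightarrow>
   in_Kpfc k ar K (prestrict M A' B')"
  by (simp add: fraisse_limit_pfc_def)

lemma fraisse_limit_pfc_universal: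
  "fraisse_limit_pfc k ar K M \<Longrightarrow> in_Kpfc k ar K (F :: (nat, nat) pstr) \<Longrightarrow> \<exists>f g. pemb f g F M"
  by (simp add: fraisse_limit_pfc_def)

lemma fraisse_limit_pfc_homogeneous:
  "fraisse_limit_pfc k ar K M \<Longrightarrow> A1 \<subseteq> sO M \<Longrightarrow> B1 \<subseteq> sP M \<Longrightarrow> A2 \<subseteq> sO M \<Longrightarrow> B2 \<subseteq> sP M \<Longrightarrow>
   finite A1 \<Longrightarrow> finite B1 \<Longrightarrow> piso f g (prestrict M A1 B1) (prestrict M A2 B2) \<Longrightarrow>
   \<exists>F G. piso F G M M \<and> (\<forall>a\<in>A1. F a = f a) \<and> (\<forall>b\<in>B1. G b = g b)"
  unfolding fraisse_limit_pfc_def by blast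

definition fibre_copies :: "('a, 'b) pstr \<Rightarrow> (nat \<Rightarrow> 'a) \<Rightarrow> nat \<Rightarrow> 'b \<Rightarrow> nat \<Rightarrow> (nat, nat) pstr" where
  "fibre_copies M e m b n = \<lparr>sO = {..<m}, sP = {..<n},
     prel = (\<lambda>i j ys. j < n \<and> set ys \<subseteq> {..<m} \<and> prel M i b (map e ys))\<rparr>"

lemma in_Kpfc_fibre_copies:
  assumes wf: "wf_pstr k ar M" and "inj_on e {..<m}"
    and fibre_in_K: "\<exists>S\<in>K. lisomorphic (fibre (prestrict M (e ` {..<m}) {b}) b) S"
  shows "in_Kpfc k ar K (fibre_copies M e m b n)"
proof -
  have "wf_pstr k ar (fibre_copies M e m b n)"
    using wf by (fastforce simp: wf_pstr_def fibre_copies_def)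
  moreover have "\<exists>S\<in>K. lisomorphic (fibre (fibre_copies M e m b n) j) S" if "j < n" for j
  proof -
    obtain S h where S: "S \<in> K" "liso h (fibre (prestrict M (e ` {..<m}) {b}) b) S"
      using fibre_in_K by (auto simp: lisomorphic_def)
    have "liso e (fibre (fibre_copies M e m b n) j) (fibre (prestrict M (e ` {..<m}) {b}) b)"
      using \<open>inj_on e {..<m}\<close> that
      by (auto simp: liso_def lemb_def fibre_def prestrict_def fibre_copies_def)
    then have "liso (h \<circ> e) (fibre (fibre_copies M e m b n) j) S" using S(2) by (rule liso_comp)
    with S(1) show ?thesis by (auto simp: lisomorphic_def)
  qed
  ultimately show ?thesis by (simp add: in_Kpfc_def fibre_copies_def)
qed

lemma pemb_fibre_copiesD:
  assumes "pemb f g (fibre_copies M e m b n) M'"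
  shows "inj_on f {..<m}" "f ` {..<m} \<subseteq> sO M'" "inj_on g {..<n}" "g ` {..<n} \<subseteq> sP M'"
    and "j < n \<Longrightarrow> ys \<in> lists {..<m} \<Longrightarrow> prel M' i (g j) (map f ys) \<longleftrightarrow> prel M i b (map e ys)"
proof -
  show "inj_on f {..<m}" "f ` {..<m} \<subseteq> sO M'" "inj_on g {..<n}" "g ` {..<n} \<subseteq> sP M'"
    using assms by (simp_all add: pemb_def fibre_copies_def)
  assume j: "j < n" and ys: "ys \<in> lists {..<m}"
  have "prel (fibre_copies M e m b n) i j ys \<longleftrightarrow> prel M' i (g j) (map f ys)"
    using assms j ys unfolding pemb_def by (simp add: fibre_copies_def)
  moreover have "set ys \<subseteq> {..<m}" using ys by auto
  ultimately show "prel M' i (g j) (map f ys) \<longleftrightarrow> prel M i b (map e ys)"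
    using j by (simp add: fibre_copies_def)
qed

text \<open>
  Universality embeds n copies of the fibre of b over A1; an automorphism extending the induced
  bijection back onto A1 carries them to n points with the same fibre as b over A1.
\<close>

lemma fraisse_limit_pfc_many_copies:
  assumes lim: "fraisse_limit_pfc k ar K M"
    and A1: "finite A1" "A1 \<subseteq> sO M" and b: "b \<in> sP M"
  shows "\<exists>B\<subseteq>sP M. card B = n \<and> (\<forall>b'\<in>B. \<forall>i. \<forall>ys\<in>lists A1. prel M i b' ys \<longleftrightarrow> prel M i b ys)"
proof -
  define m where "m = card A1"
  obtain e where e: "bij_betw e {..<m} A1"
    using ex_bij_betw_nat_finite[OF A1(1)] by (auto simp: m_def atLeast0LessThan)
  then have e_inj: "inj_on e {..<m}" and e_img: "e ` {..<m} = A1" by (simp_all add: bij_betw_def)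
  have "in_Kpfc k ar K (prestrict M A1 {b})" using fraisse_limit_pfc_age[OF lim] A1 b by simp
  then have "\<exists>S\<in>K. lisomorphic (fibre (prestrict M (e ` {..<m}) {b}) b) S"
    by (simp add: in_Kpfc_def prestrict_def e_img)
  with fraisse_limit_pfc_wf[OF lim] e_inj have "in_Kpfc k ar K (fibre_copies M e m b n)"
    by (rule in_Kpfc_fibre_copies)
  then obtain f g where fg: "pemb f g (fibre_copies M e m b n) M"
    using fraisse_limit_pfc_universal[OF lim] by blast
  note f = pemb_fibre_copiesD(1,2)[OF fg] and g = pemb_fibre_copiesD(3,4)[OF fg]
  define \<phi> where "\<phi> = e \<circ> inv_into {..<m} f"
  have "bij_betw \<phi> (f ` {..<m}) A1"
    unfolding \<phi>_def using f(1) e by (metis bij_betw_inv_into bij_betw_trans inj_on_imp_bij_betw)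
  then have "piso \<phi> id (prestrict M (f ` {..<m}) {}) (prestrict M A1 {})"
    by (auto simp: piso_def pemb_def prestrict_def bij_betw_def)
  then obtain F G where FG: "piso F G M M" and F_\<phi>: "\<forall>a\<in>f ` {..<m}. F a = \<phi> a"
    using fraisse_limit_pfc_homogeneous[OF lim f(2) empty_subsetI A1(2) empty_subsetI] by blast
  have G: "inj_on G (sP M)" "G ` sP M = sP M"
    and G_rel: "\<And>i c xs. c \<in> sP M \<Longrightarrow> xs \<in> lists (sO M) \<Longrightarrow> prel M i (G c) (map F xs) \<longleftrightarrow> prel M i c xs"
    using FG unfolding piso_def pemb_def by blast+
  have same_fibre: "prel M i (G (g j)) ys \<longleftrightarrow> prel M i b ys" if j: "j < n" and ys: "ys \<in> lists A1" for i j ys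
  proof -
    obtain zs where zs: "zs \<in> lists {..<m}" "ys = map e zs"
      using ys by (auto simp flip: e_img simp: lists_image)
    have "map F (map f zs) = ys" using zs F_\<phi> f(1) by (auto simp: \<phi>_def inv_into_f_f)
    moreover have "g j \<in> sP M" "map f zs \<in> lists (sO M)" using j zs f(2) g(2) by (auto simp: image_subset_iff)
    ultimately have "prel M i (G (g j)) ys \<longleftrightarrow> prel M i (g j) (map f zs)" using G_rel by metis
    also have "\<dots> \<longleftrightarrow> prel M i b ys" using pemb_fibre_copiesD(5)[OF fg j zs(1)] zs(2) by simp
    finally show ?thesis .
  qed
  have "inj_on (G \<circ> g) {..<n}" using comp_inj_on[OF g(1) inj_on_subset[OF G(1) g(2)]] .
  then have "card ((G \<circ> g) ` {..<n}) = n" by (metis card_image card_lessThan)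
  moreover have "(G \<circ> g) ` {..<n} \<subseteq> sP M" using g(2) G(2) by auto
  ultimately show ?thesis using same_fibre by (intro exI[of _ "(G \<circ> g) ` {..<n}"]) auto
qed

lemma fraisse_limit_pfc_fresh_copy:
  assumes lim: "fraisse_limit_pfc k ar K M"
    and A1: "finite A1" "A1 \<subseteq> sO M" and C: "finite C" and b: "b \<in> sP M"
  shows "\<exists>b'\<in>sP M. b' \<notin> C \<and> (\<forall>i. \<forall>ys\<in>lists A1. prel M i b' ys \<longleftrightarrow> prel M i b ys)"
proof -
  obtain B where B: "B \<subseteq> sP M" "card B = Suc (card C)"
    and same_fibre: "\<forall>b'\<in>B. \<forall>i. \<forall>ys\<in>lists A1. prel M i b' ys \<longleftrightarrow> prel M i b ys"
    using fraisse_limit_pfc_many_copies[OF lim A1 b, of "Suc (card C)"] by blast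
  have "\<not> B \<subseteq> C" using card_mono[OF C] B(2) by (metis Suc_n_not_le_n)
  then show ?thesis using B(1) same_fibre by blast
qed

lemma fraisse_limit_pfc_move_point:
  assumes lim: "fraisse_limit_pfc k ar K M"
    and A1: "finite A1" "A1 \<subseteq> sO M" and Z: "finite Z" "Z \<subseteq> sP M"
    and b: "b \<in> sP M" "b \<notin> Z" and b': "b' \<in> sP M" "b' \<notin> Z"
    and same_fibre: "\<forall>i. \<forall>ys\<in>lists A1. prel M i b' ys \<longleftrightarrow> prel M i b ys"
  shows "\<exists>F G. piso F G M M \<and> (\<forall>a\<in>A1. F a = a) \<and> (\<forall>z\<in>Z. G z = z) \<and> G b = b'"
proof -
  define g where "g x = (if x = b then b' else x)" for x
  have iso: "piso id g (prestrict M A1 (insert b Z)) (prestrict M A1 (insert b' Z))"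
  proof -
    have "inj_on g (insert b Z)" "g ` insert b Z = insert b' Z" using b b' by (auto simp: g_def inj_on_def)
    moreover have "\<forall>i. \<forall>c\<in>insert b Z. \<forall>ys\<in>lists A1. prel M i c ys \<longleftrightarrow> prel M i (g c) ys \<and> g c \<in> insert b' Z"
      using same_fibre b by (auto simp: g_def)
    ultimately show ?thesis by (simp add: piso_def pemb_def prestrict_def)
  qed
  have "insert b Z \<subseteq> sP M" "insert b' Z \<subseteq> sP M" "finite (insert b Z)" using Z b b' by auto
  then obtain F G where FG: "piso F G M M" "\<forall>a\<in>A1. F a = a" "\<forall>c\<in>insert b Z. G c = g c"
    using fraisse_limit_pfc_homogeneous[OF lim A1(2) _ A1(2) _ A1(1) _ iso] by auto
  moreover have "\<forall>z\<in>Z. G z = z" "G b = b'" using FG(3) b by (auto simp: g_def)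
  ultimately show ?thesis by blast
qed

lemma fraisse_limit_pfc_nonalgebraic:
  assumes lim: "fraisse_limit_pfc k ar K M"
    and va: "\<forall>x\<in>fvO p. va x \<in> sO M" and vb: "\<forall>x\<in>insert y (fvP p). vb x \<in> sP M"
    and new: "vb y \<notin> vb ` (fvP p - {y})" and sat: "sat M p va vb" and C: "finite C"
  shows "\<exists>b'\<in>sP M. b' \<notin> C \<and> sat M p va (vb(y := b'))"
proof -
  define A1 where "A1 = va ` fvO p"
  define Z where "Z = vb ` (fvP p - {y})"
  have A1: "finite A1" "A1 \<subseteq> sO M" and Z: "finite Z" "Z \<subseteq> sP M"
    using va vb finite_fvO finite_fvP by (auto simp: A1_def Z_def)
  obtain b' where b': "b' \<in> sP M" "b' \<notin> C \<union> Z"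
    and same_fibre: "\<forall>i. \<forall>ys\<in>lists A1. prel M i b' ys \<longleftrightarrow> prel M i (vb y) ys"
    using fraisse_limit_pfc_fresh_copy[OF lim A1, of "C \<union> Z" "vb y"] C Z(1) vb by blast
  obtain F G where FG: "piso F G M M" "\<forall>a\<in>A1. F a = a" "\<forall>z\<in>Z. G z = z" "G (vb y) = b'"
    using fraisse_limit_pfc_move_point[OF lim A1 Z _ _ _ _ same_fibre] vb new b' unfolding Z_def by blast
  have "sat M p va (vb(y := b')) \<longleftrightarrow> sat M p (F \<circ> va) (G \<circ> vb)"
    by (rule sat_cong) (use FG in \<open>auto simp: A1_def Z_def\<close>)
  also have "\<dots> \<longleftrightarrow> sat M p va vb" using sat_piso[OF FG(1)] va vb by blast
  finally show ?thesis using sat b' by blast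
qed

fun avoiding :: "nat \<Rightarrow> nat list \<Rightarrow> fm \<Rightarrow> fm" where
  "avoiding y [] r = r"
| "avoiding y (w # ws) r = Conj (Neg (EqP y w)) (avoiding y ws r)"

lemma sat_avoiding: "sat M (avoiding y ws r) va vb \<longleftrightarrow> vb y \<notin> vb ` set ws \<and> sat M r va vb"
  by (induction ws) auto

lemma fv_avoiding: "fvO (avoiding y ws r) = fvO r" "fvP (avoiding y ws r) \<subseteq> insert y (set ws \<union> fvP r)"
  by (induction ws) auto

text \<open>
  For fixed lengths of zs and ws, the conclusion of fraisse_limit_pfc_nonalgebraic as one formula:
  zs stands for the parameters of sort P and ws for the finite set to be avoided.
\<close>

definition nonalgebraic_fm :: "fm \<Rightarrow> nat \<Rightarrow> nat list \<Rightarrow> nat list \<Rightarrow> fm" where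
  "nonalgebraic_fm p y zs ws = Neg (Conj (avoiding y zs p) (Neg (ExP y (avoiding y ws p))))"

lemma sat_nonalgebraic_fm:
  "sat M (nonalgebraic_fm p y zs ws) va vb \<longleftrightarrow>
   (vb y \<notin> vb ` set zs \<and> sat M p va vb \<longrightarrow>
    (\<exists>b\<in>sP M. b \<notin> (vb(y := b)) ` set ws \<and> sat M p va (vb(y := b))))"
  unfolding nonalgebraic_fm_def sat.simps sat_avoiding fun_upd_same by blast

lemma fv_nonalgebraic_fm:
  "fvO (nonalgebraic_fm p y zs ws) = fvO p"
  "fvP (nonalgebraic_fm p y zs ws) \<subseteq> insert y (set zs \<union> set ws \<union> fvP p)"
  using fv_avoiding[of y zs p] fv_avoiding[of y ws p] by (auto simp: nonalgebraic_fm_def)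

lemma fraisse_limit_pfc_sat_nonalgebraic_fm:
  assumes lim: "fraisse_limit_pfc k ar K M"
    and zs: "set zs = fvP p - {y}" and ws: "y \<notin> set ws"
    and va: "\<forall>x\<in>fvO p. va x \<in> sO M" and vb: "\<forall>x\<in>set (y # zs @ ws). vb x \<in> sP M"
  shows "sat M (nonalgebraic_fm p y zs ws) va vb"
  unfolding sat_nonalgebraic_fm
proof
  assume "vb y \<notin> vb ` set zs \<and> sat M p va vb"
  then have new: "vb y \<notin> vb ` (fvP p - {y})" and sat: "sat M p va vb" using zs by simp_all
  have "\<forall>x\<in>insert y (fvP p). vb x \<in> sP M" using vb zs by auto
  from fraisse_limit_pfc_nonalgebraic[OF lim va this new sat, of "vb ` set ws"]
  obtain b where "b \<in> sP M" "b \<notin> vb ` set ws" "sat M p va (vb(y := b))" by auto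
  moreover have "(vb(y := b)) ` set ws = vb ` set ws" using ws by (intro image_cong) auto
  ultimately show "\<exists>b\<in>sP M. b \<notin> (vb(y := b)) ` set ws \<and> sat M p va (vb(y := b))" by metis
qed

lemma models_Th_realisations_infinite:
  assumes lim: "fraisse_limit_pfc k ar K M" and NM: "models_Th N M"
    and va: "\<forall>x\<in>fvO p. va x \<in> sO N" and vb: "\<forall>x\<in>insert y (fvP p). vb x \<in> sP N"
    and new: "vb y \<notin> vb ` (fvP p - {y})" and sat: "sat N p va vb"
  shows "infinite {b \<in> sP N. sat N p va (vb(y := b))}" (is "infinite ?S")
proof
  assume fin: "finite ?S"
  obtain xs where xs: "set xs = fvO p" using finite_list[OF finite_fvO] by blast
  obtain zs where zs: "set zs = fvP p - {y}" using finite_list[OF finite_Diff[OF finite_fvP]] by blast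
  have "finite (insert y (fvP p))" using finite_fvP by simp
  then obtain W where W: "finite W" "card W = card ?S" "insert y (fvP p) \<inter> W = {}"
    using finite_arbitrarily_large_disj[OF infinite_UNIV_nat] by blast
  obtain h where h: "bij_betw h W ?S" using finite_same_card_bij[OF W(1) fin W(2)] by blast
  obtain ws where ws: "set ws = W" using finite_list[OF W(1)] by blast
  \<comment> \<open>the fresh variables ws are assigned the finitely many realisations\<close>
  define vb' where "vb' x = (if x \<in> W then h x else vb x)" for x
  have vb'_vb: "\<forall>x\<in>insert y (fvP p). vb' x = vb x" using W(3) by (auto simp: vb'_def)
  have vb'_ws: "vb' ` set ws = ?S" using h ws by (simp add: vb'_def bij_betw_def)
  have "sat N (nonalgebraic_fm p y zs ws) va vb'"
  proof (rule models_Th_transfer[OF NM])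
    show "fvO (nonalgebraic_fm p y zs ws) \<subseteq> set xs" using xs by (simp add: fv_nonalgebraic_fm)
    show "fvP (nonalgebraic_fm p y zs ws) \<subseteq> set (y # zs @ ws)"
      using fv_nonalgebraic_fm(2)[of p y zs ws] zs by auto
    show "sat M (nonalgebraic_fm p y zs ws) va' vb''"
      if "\<forall>x\<in>set xs. va' x \<in> sO M" "\<forall>x\<in>set (y # zs @ ws). vb'' x \<in> sP M" for va' vb''
      using fraisse_limit_pfc_sat_nonalgebraic_fm[OF lim zs _ _ that(2)] that(1) xs ws W(3) by auto
    show "\<forall>x\<in>set xs. va x \<in> sO N" using va xs by simp
    show "\<forall>x\<in>set (y # zs @ ws). vb' x \<in> sP N" using vb vb'_vb vb'_ws zs by auto
  qed
  moreover have "vb' y \<notin> vb' ` set zs" using new vb'_vb zs by auto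
  moreover have "sat N p va vb' \<longleftrightarrow> sat N p va vb" by (rule sat_cong) (use vb'_vb in auto)
  ultimately obtain c where c: "c \<in> sP N" "c \<notin> (vb'(y := c)) ` set ws" "sat N p va (vb'(y := c))"
    unfolding sat_nonalgebraic_fm using sat by blast
  have "(vb'(y := c)) ` set ws = ?S" using vb'_ws ws W(3) by auto
  moreover have "sat N p va (vb'(y := c)) \<longleftrightarrow> sat N p va (vb(y := c))"
    by (rule sat_cong) (use vb'_vb in auto)
  then have "c \<in> ?S" using c(1,3) by simp
  ultimately show False using c(2) by blast
qed

lemma aclP_subset:
  assumes lim: "fraisse_limit_pfc k ar K M" and NM: "models_Th N M"
    and A0: "A0 \<subseteq> sO N" and B0: "B0 \<subseteq> sP N"
  shows "aclP N A0 B0 \<subseteq> B0"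
proof
  fix b assume "b \<in> aclP N A0 B0"
  then obtain p y va vb where b: "b \<in> sP N"
    and va: "\<forall>x\<in>fvO p. va x \<in> A0" and vb: "\<forall>x\<in>fvP p - {y}. vb x \<in> B0"
    and sat: "sat N p va (vb(y := b))" and fin: "finite {b' \<in> sP N. sat N p va (vb(y := b'))}"
    unfolding aclP_def by blast
  show "b \<in> B0"
  proof (rule ccontr)
    assume "b \<notin> B0"
    then have "(vb(y := b)) y \<notin> (vb(y := b)) ` (fvP p - {y})" using vb by auto
    moreover have "\<forall>x\<in>fvO p. va x \<in> sO N" "\<forall>x\<in>insert y (fvP p). (vb(y := b)) x \<in> sP N"
      using va vb b A0 B0 by auto
    ultimately have "infinite {b' \<in> sP N. sat N p va ((vb(y := b))(y := b'))}"
      using models_Th_realisations_infinite[OF lim NM] sat by blast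
    with fin show False by simp
  qed
qed

lemma subset_aclP:
  assumes "B0 \<subseteq> sP N"
  shows "B0 \<subseteq> aclP N A0 B0"
proof
  fix b assume b: "b \<in> B0"
  let ?p = "EqP 0 1" and ?vb = "\<lambda>_ :: nat. b"
  have "finite {b' \<in> sP N. sat N ?p va (?vb(0 := b'))}" for va
    by (rule finite_subset[of _ "{b}"]) auto
  then show "b \<in> aclP N A0 B0"
    unfolding aclP_def using b assms by (intro CollectI conjI exI[of _ ?p] exI[of _ 0] exI[of _ ?vb]) auto
qed

theorem lemma4p6:
  fixes k :: nat and ar :: "nat \<Rightarrow> nat" and K :: "nat lstr set"
    and M :: "('c, 'd) pstr" and N :: "('a, 'b) pstr"
    and A0 :: "'a set" and B0 :: "'b set"
  assumes "fraisse_class k ar K"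
    and "SAP K"
    and "fraisse_limit_pfc k ar K M"
    and "wf_pstr k ar N"
    and "models_Th N M"
    and "A0 \<subseteq> sO N" and "B0 \<subseteq> sP N"
  shows "aclP N A0 B0 = B0"
  using aclP_subset[OF assms(3,5,6,7)] subset_aclP[OF assms(7)] by (rule subset_antisym)

end
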